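(* Let $G$ be a finite connected graph with chromatic number $\chi$. Then either $G$ admits a proper $\chi$-coloring $c$ such that the oriented graph $D_c$ contains an oriented cycle, or for every vertex $v$ of $G$ there exists a nice $\chi$-coloring $c$ of $G$ such that $v$ is the unique sink of $D_c$.
   Context: A proper $\chi$-coloring is a map $c:V(G)\to\{1,\dots,\chi\}$ with adjacent vertices receiving different colors; colors are considered modulo $\chi$. For such a coloring $c$, $D_c$ is the oriented graph with vertex set $V(G)$ in which $ab$ is an arc if and only if $\{a,b\}$ is an edge of $G$ and $c(b)\equiv c(a)+1 \pmod{\chi}$. A sink is a vertex with no out-going arc. A proper $\chi$-coloring $c$ is called nice if $D_c$ is acyclic (contains no oriented cycle) and has exactly one sink. *)

theory Defs
  imports Main
begin

definition finite_graph :: "'a set \<Rightarrow> ('a \<Rightarrow> 'a \<Rightarrow> bool) \<Rightarrow> bool" where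
  "finite_graph V E \<longleftrightarrow> finite V \<and> (\<forall>a b. E a b \<longrightarrow> a \<in> V \<and> b \<in> V)
     \<and> (\<forall>a b. E a b \<longrightarrow> E b a) \<and> (\<forall>a. \<not> E a a)"

definition connected_graph :: "'a set \<Rightarrow> ('a \<Rightarrow> 'a \<Rightarrow> bool) \<Rightarrow> bool" where
  "connected_graph V E \<longleftrightarrow> V \<noteq> {} \<and>
     (\<forall>a\<in>V. \<forall>b\<in>V. (a, b) \<in> {(x, y). E x y}\<^sup>*)"

definition proper_coloring :: "'a set \<Rightarrow> ('a \<Rightarrow> 'a \<Rightarrow> bool) \<Rightarrow> nat \<Rightarrow> ('a \<Rightarrow> nat) \<Rightarrow> bool" where
  "proper_coloring V E k c \<longleftrightarrow> (\<forall>v\<in>V. c v \<in> {1..k}) \<and> (\<forall>a b. E a b \<longrightarrow> c a \<noteq> c b)"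

definition chromatic_number :: "'a set \<Rightarrow> ('a \<Rightarrow> 'a \<Rightarrow> bool) \<Rightarrow> nat" where
  "chromatic_number V E = (LEAST k. \<exists>c. proper_coloring V E k c)"

definition arcs :: "('a \<Rightarrow> 'a \<Rightarrow> bool) \<Rightarrow> nat \<Rightarrow> ('a \<Rightarrow> nat) \<Rightarrow> ('a \<times> 'a) set" where
  "arcs E k c = {(a, b). E a b \<and> c b mod k = (c a + 1) mod k}"

definition is_sink :: "('a \<Rightarrow> 'a \<Rightarrow> bool) \<Rightarrow> nat \<Rightarrow> ('a \<Rightarrow> nat) \<Rightarrow> 'a \<Rightarrow> bool" where
  "is_sink E k c v \<longleftrightarrow> (\<forall>w. (v, w) \<notin> arcs E k c)"

definition nice_coloring :: "'a set \<Rightarrow> ('a \<Rightarrow> 'a \<Rightarrow> bool) \<Rightarrow> nat \<Rightarrow> ('a \<Rightarrow> nat) \<Rightarrow> bool" where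
  "nice_coloring V E k c \<longleftrightarrow> proper_coloring V E k c \<and> acyclic (arcs E k c)
     \<and> (\<exists>!v. v \<in> V \<and> is_sink E k c v)"

end

theory Submission
  imports Defs
begin

text \<open>Lift colorings to heights \<open>h :: 'a \<Rightarrow> nat\<close> whose residues mod \<open>\<chi>\<close> form a proper coloring and
which differ by less than \<open>\<chi>\<close> along every edge. Fix the height of \<open>v\<close> and take a lift of maximal
total height; it exists because connectivity bounds every height in terms of that of \<open>v\<close>. If some
\<open>w \<noteq> v\<close> were a sink of the induced coloring, raising \<open>w\<close> by one would give a higher lift. So
\<open>v\<close> is the only possible sink; if all proper \<open>\<chi>\<close>-colorings are acyclic, the induced one has a sink,
which must then be \<open>v\<close>.\<close>

definition is_lift :: "('a \<Rightarrow> 'a \<Rightarrow> bool) \<Rightarrow> nat \<Rightarrow> ('a \<Rightarrow> nat) \<Rightarrow> bool" where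
  "is_lift E k h \<longleftrightarrow> (\<forall>a b. E a b \<longrightarrow> h a mod k \<noteq> h b mod k \<and> h a < h b + k)"

definition lift_coloring :: "nat \<Rightarrow> ('a \<Rightarrow> nat) \<Rightarrow> 'a \<Rightarrow> nat" where
  "lift_coloring k h x = h x mod k + 1"

lemma proper_coloring_lift_coloring:
  assumes "is_lift E k h" and "k > 0"
  shows "proper_coloring V E k (lift_coloring k h)"
  using assms by (auto simp: proper_coloring_def is_lift_def lift_coloring_def Suc_le_eq)

lemma is_lift_proper_coloring:
  assumes "proper_coloring V E k c" and "\<And>a b. E a b \<Longrightarrow> a \<in> V \<and> b \<in> V"
  shows "is_lift E k (\<lambda>x. c x - 1)"
  unfolding is_lift_def
proof (intro allI impI)
  fix a b assume "E a b"
  with assms have "c a \<in> {1..k}" "c b \<in> {1..k}" "c a \<noteq> c b"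
    unfolding proper_coloring_def by auto
  then show "(c a - 1) mod k \<noteq> (c b - 1) mod k \<and> c a - 1 < c b - 1 + k" by auto
qed

lemma arcs_lift_coloring:
  "arcs E k (lift_coloring k h) = {(a, b). E a b \<and> h b mod k = (h a + 1) mod k}"
  by (simp add: arcs_def lift_coloring_def mod_simps nat_mod_eq_iff)

lemma is_sink_lift_coloring:
  "is_sink E k (lift_coloring k h) w \<longleftrightarrow> (\<forall>u. E w u \<longrightarrow> h u mod k \<noteq> (h w + 1) mod k)"
  by (auto simp: is_sink_def arcs_lift_coloring)

lemma is_lift_raise_sink:
  assumes lift: "is_lift E k h" and sym: "\<And>a b. E a b \<Longrightarrow> E b a"
    and sink: "is_sink E k (lift_coloring k h) w"
  shows "is_lift E k (h(w := h w + 1))"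
  unfolding is_lift_def
proof (intro allI impI)
  fix a b assume ab: "E a b"
  have h: "h a mod k \<noteq> h b mod k" "h a < h b + k" "h b < h a + k"
    using lift ab sym unfolding is_lift_def by blast+
  then have "a \<noteq> b" by blast
  have out: "h u mod k \<noteq> (h w + 1) mod k" if "E w u" for u
    using sink that by (simp add: is_sink_lift_coloring)
  consider "a = w" | "b = w" | "a \<noteq> w" "b \<noteq> w" by blast
  then show "(h(w := h w + 1)) a mod k \<noteq> (h(w := h w + 1)) b mod k
             \<and> (h(w := h w + 1)) a < (h(w := h w + 1)) b + k"
  proof cases
    case 1
    \<comment> \<open>The bound can only fail if \<open>h w + 1 = h b + k\<close>, which would make \<open>(w, b)\<close> an arc.\<close>
    with ab out have "h b mod k \<noteq> (h w + 1) mod k" by blast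
    then have "h w + 1 \<noteq> h b + k" by (metis mod_add_self2)
    with 1 h \<open>a \<noteq> b\<close> \<open>h b mod k \<noteq> (h w + 1) mod k\<close> show ?thesis by auto
  next
    case 2
    with ab sym out have "h a mod k \<noteq> (h w + 1) mod k" by blast
    with 2 h \<open>a \<noteq> b\<close> show ?thesis by auto
  qed (use h in auto)
qed

lemma is_lift_bounded_along_walk:
  assumes "(x, y) \<in> {(a, b). E a b} ^^ n" and "is_lift E k h"
  shows "h x \<le> h y + k * n"
  using assms(1)
proof (induction n arbitrary: y)
  case 0
  then show ?case by simp
next
  case (Suc n)
  then obtain z where "(x, z) \<in> {(a, b). E a b} ^^ n" "E z y" by auto
  with Suc.IH assms(2) have "h x \<le> h z + k * n" "h z < h y + k"
    unfolding is_lift_def by auto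
  then show ?case by simp
qed

lemma proper_coloring_sinks_only_at:
  assumes graph: "finite_graph V E" and conn: "connected_graph V E"
    and c0: "proper_coloring V E k c0" and v: "v \<in> V"
  shows "\<exists>c. proper_coloring V E k c \<and> (\<forall>w\<in>V. is_sink E k c w \<longrightarrow> w = v)"
proof -
  have fin: "finite V" and in_V: "\<And>a b. E a b \<Longrightarrow> a \<in> V \<and> b \<in> V"
    and sym: "\<And>a b. E a b \<Longrightarrow> E b a"
    using graph unfolding finite_graph_def by auto
  define H where "H = {h. is_lift E k h \<and> h v = c0 v - 1}"
  have lift_c0: "(\<lambda>x. c0 x - 1) \<in> H"
    using is_lift_proper_coloring[OF c0 in_V] by (simp add: H_def)
  have "\<forall>x\<in>V. \<exists>n. (x, v) \<in> {(a, b). E a b} ^^ n"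
    using conn v unfolding connected_graph_def by (simp add: rtrancl_power)
  then obtain len where len: "\<And>x. x \<in> V \<Longrightarrow> (x, v) \<in> {(a, b). E a b} ^^ len x"
    by metis
  have height_bound: "h x \<le> c0 v - 1 + k * len x" if "h \<in> H" "x \<in> V" for h x
    using is_lift_bounded_along_walk[OF len[OF that(2)], where k = k and h = h] that(1) by (simp add: H_def)
  have sum_bound: "(\<Sum>x\<in>V. h x) < (\<Sum>x\<in>V. c0 v - 1 + k * len x) + 1" if "h \<in> H" for h
    using height_bound[OF that] by (simp add: sum_mono le_imp_less_Suc)
  obtain h where h: "h \<in> H" and h_max: "\<And>g. g \<in> H \<Longrightarrow> (\<Sum>x\<in>V. g x) \<le> (\<Sum>x\<in>V. h x)"
    using ex_has_greatest_nat[of "\<lambda>h. h \<in> H" _ "\<lambda>h. \<Sum>x\<in>V. h x", OF lift_c0] sum_bound by blast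
  have "k > 0"
    using c0 v unfolding proper_coloring_def by fastforce
  have "w = v" if w: "w \<in> V" "is_sink E k (lift_coloring k h) w" for w
  proof (rule ccontr)
    assume "w \<noteq> v"
    with h is_lift_raise_sink[OF _ sym w(2)] have raised: "h(w := h w + 1) \<in> H"
      by (simp add: H_def)
    have "(\<Sum>x\<in>V. (h(w := h w + 1)) x) = (\<Sum>x\<in>V. h x) + 1"
      using fin w(1) by (simp add: sum.remove)
    with h_max[OF raised] show False
      by simp
  qed
  moreover have "proper_coloring V E k (lift_coloring k h)"
    using h \<open>k > 0\<close> by (simp add: H_def proper_coloring_lift_coloring)
  ultimately show ?thesis by blast
qed

lemma acyclic_finite_has_sink:
  assumes "finite V" "V \<noteq> {}" "r \<subseteq> V \<times> V" "acyclic r"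
  shows "\<exists>z\<in>V. \<forall>y. (z, y) \<notin> r"
proof -
  have "finite r"
    using assms(1,3) by (simp add: finite_subset)
  then have "wf (r\<inverse>)"
    using assms(4) by (rule finite_acyclic_wf_converse)
  then obtain z where "z \<in> V" "\<And>y. (y, z) \<in> r\<inverse> \<Longrightarrow> y \<notin> V"
    using assms(2) by (metis ex_in_conv wfE_min)
  with assms(3) show ?thesis by blast
qed

lemma proper_coloring_chromatic_number:
  assumes "finite_graph V E"
  shows "\<exists>c. proper_coloring V E (chromatic_number V E) c"
proof -
  obtain f where f: "bij_betw f V {0..<card V}"
    using assms ex_bij_betw_finite_nat unfolding finite_graph_def by metis
  have "proper_coloring V E (card V) (\<lambda>x. f x + 1)"
    unfolding proper_coloring_def
  proof (intro conjI ballI allI impI)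
    fix x assume "x \<in> V"
    then have "f x < card V"
      using bij_betw_apply[OF f] by simp
    then show "f x + 1 \<in> {1..card V}"
      by simp
  next
    fix a b assume "E a b"
    with assms have "a \<in> V" "b \<in> V" "a \<noteq> b"
      unfolding finite_graph_def by metis+
    then show "f a + 1 \<noteq> f b + 1"
      using bij_betw_imp_inj_on[OF f] by (simp add: inj_on_eq_iff)
  qed
  then have "\<exists>c. proper_coloring V E (card V) c" by blast
  then show ?thesis
    unfolding chromatic_number_def by (rule LeastI[of "\<lambda>k. \<exists>c. proper_coloring V E k c"])
qed

theorem corollary5:
  fixes V :: "'a set" and E :: "'a \<Rightarrow> 'a \<Rightarrow> bool"
  assumes "finite_graph V E" and "connected_graph V E"
  shows "(\<exists>c. proper_coloring V E (chromatic_number V E) c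
              \<and> \<not> acyclic (arcs E (chromatic_number V E) c))
       \<or> (\<forall>v\<in>V. \<exists>c. nice_coloring V E (chromatic_number V E) c
              \<and> is_sink E (chromatic_number V E) c v)"
proof -
  define k where "k = chromatic_number V E"
  have fin: "finite V" and arcs_in_V: "arcs E k c \<subseteq> V \<times> V" for c
    using assms(1) unfolding finite_graph_def arcs_def by auto
  have "\<exists>c. nice_coloring V E k c \<and> is_sink E k c v"
    if acyclic: "\<And>c. proper_coloring V E k c \<Longrightarrow> acyclic (arcs E k c)" and v: "v \<in> V" for v
  proof -
    obtain c where c: "proper_coloring V E k c" and only_v: "\<forall>w\<in>V. is_sink E k c w \<longrightarrow> w = v"
      using proper_coloring_sinks_only_at[OF assms _ v] proper_coloring_chromatic_number[OF assms(1)]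
      unfolding k_def by blast
    obtain z where "z \<in> V" "is_sink E k c z"
      using acyclic_finite_has_sink[OF fin _ arcs_in_V acyclic[OF c]] v
      unfolding is_sink_def by blast
    with only_v have "is_sink E k c v" by blast
    with c acyclic[OF c] only_v v show ?thesis
      unfolding nice_coloring_def by blast
  qed
  then show ?thesis
    unfolding k_def by blast
qed

end
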